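(* Let $d\ge1$, $\mathcal{C}$ the middle-thirds Cantor set, $\mathcal{K}=\mathcal{C}^d$, $s=\dim_H\mathcal{K}$, and $\mu$ the restriction to $\mathcal{K}$ of the $s$-dimensional Hausdorff measure. Then $\alpha_1(\mu)=\frac{\log2}{\log3}$.
   Context: $\alpha_1(\mu)=\liminf_{\varepsilon\to0}\frac{\log\sup_{\mathcal{L}}\mu(\mathcal{L}^{(\varepsilon)})}{\log\varepsilon}$, the supremum over affine hyperplanes $\mathcal{L}$ of $\mathbb{R}^d$ and $\mathcal{L}^{(\varepsilon)}$ the open Euclidean $\varepsilon$-neighborhood of $\mathcal{L}$. *)

theory Defs
  imports "HOL-Analysis.Analysis"
begin

fun cantor_stage :: "nat \<Rightarrow> real set" where
  "cantor_stage 0 = {0..1}"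
| "cantor_stage (Suc n) =
     (\<lambda>x. x / 3) ` cantor_stage n \<union> (\<lambda>x. x / 3 + 2 / 3) ` cantor_stage n"

definition cantor_set :: "real set" where
  "cantor_set = (\<Inter>n. cantor_stage n)"

text \<open>The d-fold product C^d inside real^'n (d = CARD('n)).\<close>
definition cantor_dust :: "(real ^ 'n) set" where
  "cantor_dust = {x. \<forall>i. x $ i \<in> cantor_set}"

text \<open>s-dimensional gauge of a set, with convention 0^0 = 1 and gauge of {} = 0.\<close>
definition hgauge :: "real \<Rightarrow> 'a::metric_space set \<Rightarrow> ennreal" where
  "hgauge s U = (if U = {} then 0
                 else if diameter U = 0 then (if s = 0 then 1 else 0)
                 else ennreal (diameter U powr s))"

definition hausdorff_pre :: "real \<Rightarrow> real \<Rightarrow> 'a::metric_space set \<Rightarrow> ennreal" where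
  "hausdorff_pre s \<delta> A =
     (INF U \<in> {U :: nat \<Rightarrow> 'a set. A \<subseteq> (\<Union>i. U i) \<and>
                 (\<forall>i. bounded (U i) \<and> diameter (U i) \<le> \<delta>)}.
        \<Sum>i. hgauge s (U i))"

definition hausdorff_measure :: "real \<Rightarrow> 'a::metric_space set \<Rightarrow> ennreal" where
  "hausdorff_measure s A = (SUP \<delta> \<in> {0<..}. hausdorff_pre s \<delta> A)"

definition hausdorff_dim :: "'a::metric_space set \<Rightarrow> real" where
  "hausdorff_dim A = Inf {t. t \<ge> 0 \<and> hausdorff_measure t A = 0}"

definition affine_hyperplanes :: "(real ^ 'n) set set" where
  "affine_hyperplanes = {{x. a \<bullet> x = b} | a b. a \<noteq> 0}"

definition open_nbhd :: "'a::metric_space set \<Rightarrow> real \<Rightarrow> 'a set" where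
  "open_nbhd L \<epsilon> = {x. \<exists>y\<in>L. dist x y < \<epsilon>}"

definition alpha1 :: "((real ^ 'n) set \<Rightarrow> ennreal) \<Rightarrow> ereal" where
  "alpha1 \<mu> = Liminf (at_right 0)
     (\<lambda>\<epsilon>. ereal (ln (enn2real (SUP L \<in> affine_hyperplanes. \<mu> (open_nbhd L \<epsilon>))) / ln \<epsilon>))"

end

theory Submission
  imports Defs
begin

text \<open>
  The m-th stage of the dust K = C^d consists of 2^(md) closed triadic cubes of side 3^(-m),
  any two of which are 3^(-m) apart in some coordinate. Put s = d log 2 / log 3, so that
  3^(-ms) = 2^(-md). Covering by the cubes of one level bounds the Hausdorff measure from
  above. For lower bounds, a set of diameter about 3^(-k) meets K inside a single cube of
  level k; after passing to a finite subcover by compactness, counting the corners of the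
  cubes of a common fine level shows that the level-n cubes with codes in F carry
  H^s-mass at least 3^(-s) |F| 2^(-nd). Hence dim_H K = s.

  For eps about 3^(-n), a point of K within eps of the hyperplane a . x = b lies in a cube of
  level n + j whose code in the coordinate of the largest |a_i| is determined by its other
  codes up to O(2^j) admissible values. So the neighbourhood is covered by
  O(2^j 2^((n+j)(d-1))) such cubes and has mass O(2^(-n)) = O(eps^(log 2 / log 3)), while the
  neighbourhood of a coordinate hyperplane contains 2^(n(d-1)) cubes of level n and has mass
  of the same order.
\<close>

section \<open>Triadic codes of the Cantor set\<close>

text \<open>The \<open>m\<close>-th stage of the Cantor set is the union of the intervals \<open>triadic_interval m p\<close>
  over the codes \<open>p \<in> cantor_codes m\<close>, the numbers below \<open>3\<^sup>m\<close> with ternary digits in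
  \<open>{0, 2}\<close>.\<close>

fun cantor_codes :: "nat \<Rightarrow> nat set" where
  "cantor_codes 0 = {0}"
| "cantor_codes (Suc m) = cantor_codes m \<union> (\<lambda>p. p + 2 * 3^m) ` cantor_codes m"

definition triadic_interval :: "nat \<Rightarrow> nat \<Rightarrow> real set" where
  "triadic_interval m p = {real p / 3^m .. (real p + 1) / 3^m}"

lemma finite_cantor_codes: "finite (cantor_codes m)"
  by (induction m) auto

lemma cantor_codes_less: "p \<in> cantor_codes m \<Longrightarrow> p < 3^m"
  by (induction m arbitrary: p) fastforce+

lemma zero_in_cantor_codes: "0 \<in> cantor_codes m"
  by (induction m) auto

lemma card_cantor_codes: "card (cantor_codes m) = 2^m"
proof (induction m)
  case (Suc m)
  have "cantor_codes m \<inter> (\<lambda>p. p + 2 * 3^m) ` cantor_codes m = {}"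
    using cantor_codes_less[of _ m] by fastforce
  moreover have "card ((\<lambda>p. p + 2 * 3^m) ` cantor_codes m) = card (cantor_codes m)"
    by (rule card_image) (auto simp: inj_on_def)
  ultimately show ?case
    using Suc finite_cantor_codes by (simp add: card_Un_disjoint)
qed simp

lemma cantor_codes_gap:
  "p \<in> cantor_codes m \<Longrightarrow> q \<in> cantor_codes m \<Longrightarrow> p \<noteq> q \<Longrightarrow> p + 2 \<le> q \<or> q + 2 \<le> p"
proof (induction m arbitrary: p q)
  case (Suc m)
  have low: "x + 2 \<le> y + 2 * 3^m" if "x \<in> cantor_codes m" for x y :: nat
    using cantor_codes_less[OF that] by (simp add: Suc_le_eq less_imp_le_nat)
  from Suc.prems show ?case
    using Suc.IH low by auto metis
qed simp

lemma cantor_codes_add: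
  "cantor_codes (k + j) = {3^j * q + r | q r. q \<in> cantor_codes k \<and> r \<in> cantor_codes j}"
proof (induction k)
  case (Suc k)
  have shift: "3^j * (q + 2 * 3^k) + r = (3^j * q + r) + 2 * 3^(k + j)" for q r :: nat
    by (simp add: algebra_simps power_add)
  show ?case
  proof (intro equalityI subsetI)
    fix x assume "x \<in> cantor_codes (Suc k + j)"
    then consider q r where "q \<in> cantor_codes k" "r \<in> cantor_codes j" "x = 3^j * q + r"
      | q r where "q \<in> cantor_codes k" "r \<in> cantor_codes j" "x = 3^j * q + r + 2 * 3^(k + j)"
      using Suc by auto
    then show "x \<in> {3^j * q + r | q r. q \<in> cantor_codes (Suc k) \<and> r \<in> cantor_codes j}"
    proof cases
      case (2 q r)
      then have "x = 3^j * (q + 2 * 3^k) + r" "q + 2 * 3^k \<in> cantor_codes (Suc k)"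
        using shift by auto
      then show ?thesis
        using \<open>r \<in> cantor_codes j\<close> by blast
    qed auto
  next
    fix x assume "x \<in> {3^j * q + r | q r. q \<in> cantor_codes (Suc k) \<and> r \<in> cantor_codes j}"
    then obtain q r where q: "q \<in> cantor_codes (Suc k)" and r: "r \<in> cantor_codes j"
      and x: "x = 3^j * q + r"
      by blast
    from q consider "q \<in> cantor_codes k" | q' where "q' \<in> cantor_codes k" "q = q' + 2 * 3^k"
      by auto
    then show "x \<in> cantor_codes (Suc k + j)"
    proof cases
      case 1
      then show ?thesis
        using Suc r x by auto
    next
      case (2 q')
      then have "3^j * q' + r \<in> cantor_codes (k + j)" "x = (3^j * q' + r) + 2 * 3^(k + j)"
        using Suc r x shift by auto
      then show ?thesis
        by (auto intro: rev_image_eqI)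
    qed
  qed
qed simp

lemma cantor_stage_eq: "cantor_stage m = (\<Union>p\<in>cantor_codes m. triadic_interval m p)"
proof (induction m)
  case (Suc m)
  have left: "(\<lambda>x. x / 3) ` triadic_interval m p = triadic_interval (Suc m) p" for p
    using image_affinity_atLeastAtMost_div[of "3::real" 0] by (simp add: triadic_interval_def)
  have right: "(\<lambda>x. x / 3 + 2 / 3) ` triadic_interval m p
      = triadic_interval (Suc m) (p + 2 * 3^m)" for p
    using image_affinity_atLeastAtMost_div[of "3::real" "2 / 3"]
    by (simp add: triadic_interval_def add_divide_distrib)
  show ?case
    by (simp add: Suc image_UN image_Un left right)
qed (simp add: triadic_interval_def)

lemma mem_cantor_set_iff:
  "x \<in> cantor_set \<longleftrightarrow> (\<forall>m. \<exists>p\<in>cantor_codes m. x \<in> triadic_interval m p)"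
  by (simp add: cantor_set_def cantor_stage_eq)

lemma mem_triadic_interval:
  "x \<in> triadic_interval m p \<longleftrightarrow> real p / 3^m \<le> x \<and> x \<le> (real p + 1) / 3^m"
  by (simp add: triadic_interval_def)

lemma left_endpoint_in_triadic_interval: "real p / 3^m \<in> triadic_interval m p"
  by (simp add: mem_triadic_interval divide_right_mono)

lemma triadic_interval_far:
  assumes "p \<in> cantor_codes m" "q \<in> cantor_codes m" "p \<noteq> q" "x \<in> triadic_interval m p"
  shows "x \<le> real q / 3^m - 1 / 3^m \<or> (real q + 1) / 3^m + 1 / 3^m \<le> x"
proof -
  have "(real p + 2) * 3^m \<le> real q * 3^m \<or> (real q + 2) * 3^m \<le> real p * 3^m"
    using cantor_codes_gap[OF assms(1-3)] by (auto intro!: mult_right_mono)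
  then have "(real p + 1) / 3^m \<le> real q / 3^m - 1 / 3^m \<or> (real q + 1) / 3^m + 1 / 3^m \<le> real p / 3^m"
    by (auto simp: field_simps)
  then show ?thesis
    using assms(4) by (auto simp: mem_triadic_interval)
qed

lemma triadic_interval_unique:
  assumes "p \<in> cantor_codes m" "q \<in> cantor_codes m"
    and "x \<in> triadic_interval m p" "x \<in> triadic_interval m q"
  shows "p = q"
  using triadic_interval_far[OF assms(1,2) _ assms(3)] assms(4)
  by (auto simp: mem_triadic_interval field_simps)

lemma triadic_interval_mono:
  assumes "r \<in> cantor_codes j"
  shows "triadic_interval (k + j) (3^j * q + r) \<subseteq> triadic_interval k q"
proof -
  have "real r + 1 \<le> 3^j"
    using cantor_codes_less[OF assms] by (metis Suc_leI of_nat_Suc of_nat_le_iff of_nat_numeral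
        of_nat_power add.commute)
  then have "(real r + 1) * 3^k \<le> 3^j * 3^k"
    by (rule mult_right_mono) simp
  then have "(real (3^j * q + r) + 1) / 3^(k + j) \<le> (real q + 1) / 3^k"
    by (simp add: power_add field_simps)
  moreover have "real q / 3^k \<le> real (3^j * q + r) / 3^(k + j)"
    by (simp add: power_add field_simps)
  ultimately show ?thesis
    by (auto simp: mem_triadic_interval)
qed

lemma left_endpoint_in_cantor_set:
  assumes "p \<in> cantor_codes m"
  shows "real p / 3^m \<in> cantor_set"
  unfolding mem_cantor_set_iff
proof
  fix m'
  show "\<exists>q\<in>cantor_codes m'. real p / 3^m \<in> triadic_interval m' q"
  proof (cases "m \<le> m'")
    case True
    then obtain j where j: "m' = m + j"
      using le_Suc_ex by blast
    have "3^j * p + 0 \<in> cantor_codes m'"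
      using cantor_codes_add[of m j] j assms zero_in_cantor_codes by blast
    moreover have "real p / 3^m \<in> triadic_interval m' (3^j * p + 0)"
      by (simp add: mem_triadic_interval j power_add field_simps)
    ultimately show ?thesis by blast
  next
    case False
    then obtain j where j: "m = m' + j"
      using le_Suc_ex[of m' m] by auto
    obtain q r where qr: "q \<in> cantor_codes m'" "r \<in> cantor_codes j" "p = 3^j * q + r"
      using cantor_codes_add[of m' j] j assms by blast
    then show ?thesis
      using triadic_interval_mono[OF qr(2), of m' q] left_endpoint_in_triadic_interval[of p m] j
      by auto
  qed
qed

lemma cantor_codes_within:
  assumes "q \<in> cantor_codes k"
  shows "{p \<in> cantor_codes (k + j). real p / 3^(k + j) \<in> triadic_interval k q}
      = (\<lambda>r. 3^j * q + r) ` cantor_codes j"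
proof (intro equalityI subsetI)
  fix p assume "p \<in> {p \<in> cantor_codes (k + j). real p / 3^(k + j) \<in> triadic_interval k q}"
  then have p: "p \<in> cantor_codes (k + j)" "real p / 3^(k + j) \<in> triadic_interval k q"
    by auto
  obtain q' r where qr: "q' \<in> cantor_codes k" "r \<in> cantor_codes j" "p = 3^j * q' + r"
    using cantor_codes_add[of k j] p by blast
  then have "real p / 3^(k + j) \<in> triadic_interval k q'"
    using triadic_interval_mono[OF qr(2), of k q'] left_endpoint_in_triadic_interval[of p "k + j"]
    by auto
  then have "q' = q"
    using triadic_interval_unique[OF qr(1) assms] p by blast
  then show "p \<in> (\<lambda>r. 3^j * q + r) ` cantor_codes j"
    using qr by blast
next
  fix p assume "p \<in> (\<lambda>r. 3^j * q + r) ` cantor_codes j"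
  then obtain r where r: "r \<in> cantor_codes j" "p = 3^j * q + r"
    by blast
  then show "p \<in> {p \<in> cantor_codes (k + j). real p / 3^(k + j) \<in> triadic_interval k q}"
    using cantor_codes_add[of k j] assms triadic_interval_mono[OF r(1), of k q]
      left_endpoint_in_triadic_interval[of p "k + j"]
    by auto
qed

lemma card_cantor_codes_within:
  assumes "q \<in> cantor_codes k"
  shows "card {p \<in> cantor_codes (k + j). real p / 3^(k + j) \<in> triadic_interval k q} = 2^j"
  unfolding cantor_codes_within[OF assms]
  by (subst card_image) (auto simp: inj_on_def card_cantor_codes)

lemma card_nat_window_le:
  fixes u H :: real
  assumes "H \<ge> 0" "Q \<subseteq> {q::nat. \<bar>real q - u\<bar> \<le> H}"
  shows "real (card Q) \<le> 2 * H + 1"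
proof -
  have "Q \<subseteq> nat ` {\<lceil>u - H\<rceil>..\<lfloor>u + H\<rfloor>}"
  proof
    fix q assume "q \<in> Q"
    then have "int q \<in> {\<lceil>u - H\<rceil>..\<lfloor>u + H\<rfloor>}"
      using assms(2) by (auto simp: ceiling_le_iff le_floor_iff)
    then show "q \<in> nat ` {\<lceil>u - H\<rceil>..\<lfloor>u + H\<rfloor>}"
      by (auto intro!: image_eqI[where x="int q"])
  qed
  then have "card Q \<le> card (nat ` {\<lceil>u - H\<rceil>..\<lfloor>u + H\<rfloor>})"
    by (rule card_mono[rotated]) simp
  also have "\<dots> \<le> card {\<lceil>u - H\<rceil>..\<lfloor>u + H\<rfloor>}"
    by (rule card_image_le) simp
  finally have "real (card Q) \<le> real (nat (\<lfloor>u + H\<rfloor> + 1 - \<lceil>u - H\<rceil>))"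
    by simp
  also have "\<dots> \<le> 2 * H + 1"
  proof (cases "0 \<le> \<lfloor>u + H\<rfloor> + 1 - \<lceil>u - H\<rceil>")
    case True
    then show ?thesis
      by simp linarith
  qed (use assms(1) in simp)
  finally show ?thesis .
qed

text \<open>A window of width \<open>h 3\<^sup>j\<close> meets at most \<open>2 h + 3\<close> codes of level \<open>n\<close>, each with \<open>2\<^sup>j\<close>
  descendants at level \<open>n + j\<close>.\<close>
lemma card_cantor_codes_window:
  fixes c h :: real
  assumes "h \<ge> 0"
  shows "real (card {v \<in> cantor_codes (n + j). \<bar>real v - c\<bar> \<le> h * 3^j}) \<le> (2 * h + 3) * 2^j"
proof -
  define Q where "Q = {q \<in> cantor_codes n. \<bar>real q - c / 3^j\<bar> \<le> h + 1}"
  have sub: "{v \<in> cantor_codes (n + j). \<bar>real v - c\<bar> \<le> h * 3^j}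
      \<subseteq> (\<Union>q\<in>Q. (\<lambda>r. 3^j * q + r) ` cantor_codes j)"
  proof
    fix v assume v: "v \<in> {v \<in> cantor_codes (n + j). \<bar>real v - c\<bar> \<le> h * 3^j}"
    obtain q r where qr: "q \<in> cantor_codes n" "r \<in> cantor_codes j" "v = 3^j * q + r"
      using cantor_codes_add[of n j] v by blast
    have "real r \<le> 3^j"
      using cantor_codes_less[OF qr(2)] by (simp add: less_imp_le)
    moreover have "\<bar>real v - c\<bar> \<le> h * 3^j" "real v = 3^j * real q + real r"
      using v qr(3) by auto
    ultimately have "\<bar>3^j * real q - c\<bar> \<le> (h + 1) * 3^j"
      unfolding abs_le_iff distrib_right by linarith
    then have "\<bar>real q - c / 3^j\<bar> \<le> h + 1"
      by (simp add: abs_le_iff field_simps)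
    then show "v \<in> (\<Union>q\<in>Q. (\<lambda>r. 3^j * q + r) ` cantor_codes j)"
      using qr by (auto simp: Q_def)
  qed
  have "finite Q"
    using finite_cantor_codes by (simp add: Q_def)
  then have "card {v \<in> cantor_codes (n + j). \<bar>real v - c\<bar> \<le> h * 3^j}
      \<le> card (\<Union>q\<in>Q. (\<lambda>r. 3^j * q + r) ` cantor_codes j)"
    using finite_cantor_codes by (intro card_mono[OF _ sub]) auto
  also have "\<dots> \<le> (\<Sum>q\<in>Q. card ((\<lambda>r. 3^j * q + r) ` cantor_codes j))"
    using \<open>finite Q\<close> by (rule card_UN_le)
  also have "\<dots> = card Q * 2^j"
    by (simp add: card_image inj_on_def card_cantor_codes)
  finally have "real (card {v \<in> cantor_codes (n + j). \<bar>real v - c\<bar> \<le> h * 3^j}) \<le> real (card Q) * 2^j"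
    by (metis of_nat_le_iff of_nat_mult of_nat_numeral of_nat_power)
  also have "\<dots> \<le> (2 * h + 3) * 2^j"
  proof -
    have "real (card Q) \<le> 2 * (h + 1) + 1"
      by (rule card_nat_window_le) (use assms in \<open>auto simp: Q_def\<close>)
    then show ?thesis
      by (intro mult_right_mono) auto
  qed
  finally show ?thesis .
qed

section \<open>Triadic cubes of the Cantor dust\<close>

definition cube_codes :: "nat \<Rightarrow> ('n::finite \<Rightarrow> nat) set" where
  "cube_codes m = {p. \<forall>i. p i \<in> cantor_codes m}"

definition triadic_cube :: "nat \<Rightarrow> ('n::finite \<Rightarrow> nat) \<Rightarrow> (real^'n) set" where
  "triadic_cube m p = {x. \<forall>i. x $ i \<in> triadic_interval m (p i)}"

definition cube_corner :: "nat \<Rightarrow> ('n::finite \<Rightarrow> nat) \<Rightarrow> real^'n" where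
  "cube_corner m p = (\<chi> i. real (p i) / 3^m)"

lemma Collect_forall_mem_eq_PiE: "{p. \<forall>i. p i \<in> A i} = PiE UNIV A"
  by (auto simp: PiE_UNIV_domain Pi_def)

lemma finite_cube_codes: "finite (cube_codes m :: ('n::finite \<Rightarrow> nat) set)"
  unfolding cube_codes_def Collect_forall_mem_eq_PiE
  by (rule finite_PiE) (simp_all add: finite_cantor_codes)

lemma card_cube_codes: "card (cube_codes m :: ('n::finite \<Rightarrow> nat) set) = 2^(m * CARD('n))"
  unfolding cube_codes_def Collect_forall_mem_eq_PiE
  by (simp add: card_PiE card_cantor_codes power_mult)

lemma cube_codes_0: "cube_codes 0 = {\<lambda>_. 0}"
  by (auto simp: cube_codes_def)

lemma triadic_cube_eq_cbox:
  "triadic_cube m p = cbox (\<chi> i. real (p i) / 3^m) (\<chi> i. (real (p i) + 1) / 3^m)"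
  by (auto simp: triadic_cube_def mem_box_cart mem_triadic_interval)

lemma bounded_triadic_cube: "bounded (triadic_cube m p)"
  unfolding triadic_cube_eq_cbox by (rule bounded_cbox)

lemma diameter_triadic_cube:
  "diameter (triadic_cube m p :: (real^'n::finite) set) \<le> real CARD('n) / 3^m"
proof (rule diameter_le)
  fix x y :: "real^'n" assume xy: "x \<in> triadic_cube m p" "y \<in> triadic_cube m p"
  have "norm (x - y) \<le> (\<Sum>i\<in>UNIV. \<bar>(x - y) $ i\<bar>)"
    by (rule norm_le_l1_cart)
  also have "\<dots> \<le> (\<Sum>i\<in>(UNIV::'n set). 1 / 3^m)"
  proof (rule sum_mono)
    fix i
    have "x $ i \<in> triadic_interval m (p i)" "y $ i \<in> triadic_interval m (p i)"
      using xy by (auto simp: triadic_cube_def)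
    then show "\<bar>(x - y) $ i\<bar> \<le> 1 / 3^m"
      by (auto simp: mem_triadic_interval abs_le_iff field_simps)
  qed
  finally show "norm (x - y) \<le> real CARD('n) / 3^m"
    by simp
qed simp

lemma cantor_dust_in_triadic_cube:
  assumes "x \<in> cantor_dust"
  obtains p where "p \<in> cube_codes m" "x \<in> triadic_cube m p"
proof -
  have "\<forall>i. \<exists>q. q \<in> cantor_codes m \<and> x $ i \<in> triadic_interval m q"
    using assms by (auto simp: cantor_dust_def mem_cantor_set_iff)
  then obtain p where "\<forall>i. p i \<in> cantor_codes m \<and> x $ i \<in> triadic_interval m (p i)"
    by metis
  then show ?thesis
    using that by (auto simp: cube_codes_def triadic_cube_def)
qed

lemma cantor_dust_subset_unit_cube: "cantor_dust \<subseteq> triadic_cube 0 (\<lambda>_. 0)"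
proof
  fix x :: "real^'n" assume "x \<in> cantor_dust"
  then obtain p where "p \<in> cube_codes 0" "x \<in> triadic_cube 0 p"
    by (rule cantor_dust_in_triadic_cube)
  then show "x \<in> triadic_cube 0 (\<lambda>_. 0)"
    by (simp add: cube_codes_0)
qed

lemma cube_corner_in_cantor_dust: "p \<in> cube_codes m \<Longrightarrow> cube_corner m p \<in> cantor_dust"
  by (auto simp: cube_corner_def cube_codes_def cantor_dust_def left_endpoint_in_cantor_set)

lemma triadic_cube_unique:
  assumes "p \<in> cube_codes m" "q \<in> cube_codes m" "x \<in> triadic_cube m p" "x \<in> triadic_cube m q"
  shows "p = q"
proof
  fix i
  show "p i = q i"
    using assms triadic_interval_unique[of "p i" m "q i" "x $ i"]
    by (auto simp: cube_codes_def triadic_cube_def)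
qed

text \<open>Distinct cubes of the same level are separated by a gap of width \<open>3\<^sup>-\<^sup>m\<close> in some
  coordinate.\<close>
lemma cantor_dust_in_triadic_cube_if_near:
  assumes "x \<in> cantor_dust" "q \<in> cube_codes m"
    and "\<And>i. real (q i) / 3^m - 1 / 3^m < x $ i \<and> x $ i < (real (q i) + 1) / 3^m + 1 / 3^m"
  shows "x \<in> triadic_cube m q"
proof -
  obtain p where p: "p \<in> cube_codes m" "x \<in> triadic_cube m p"
    using cantor_dust_in_triadic_cube[OF assms(1)] .
  have "p = q"
  proof
    fix i
    show "p i = q i"
    proof (rule ccontr)
      assume "p i \<noteq> q i"
      moreover have "p i \<in> cantor_codes m" "q i \<in> cantor_codes m" "x $ i \<in> triadic_interval m (p i)"
        using p assms(2) by (auto simp: cube_codes_def triadic_cube_def)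
      ultimately show False
        using triadic_interval_far[of "p i" m "q i" "x $ i"] assms(3)[of i] by linarith
    qed
  qed
  then show ?thesis
    using p(2) by simp
qed

lemma closed_cantor_set: "closed cantor_set"
  unfolding cantor_set_def cantor_stage_eq triadic_interval_def
  by (intro closed_INT closed_UN) (auto simp: finite_cantor_codes)

lemma closed_cantor_dust: "closed cantor_dust"
proof -
  have "cantor_dust = (\<Inter>i. (\<lambda>x. x $ i) -` cantor_set)"
    by (auto simp: cantor_dust_def)
  also have "closed \<dots>"
    by (intro closed_INT ballI closed_vimage_vec_nth closed_cantor_set)
  finally show ?thesis .
qed

lemma compact_cantor_dust_Int_cubes:
  assumes "finite F"
  shows "compact (cantor_dust \<inter> (\<Union>p\<in>F. triadic_cube m p))"
proof -
  have "bounded (cantor_dust :: (real^'n::finite) set)"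
    using cantor_dust_subset_unit_cube bounded_triadic_cube bounded_subset by blast
  moreover have "closed (\<Union>p\<in>F. triadic_cube m p)"
    using assms unfolding triadic_cube_eq_cbox by auto
  ultimately show ?thesis
    using closed_cantor_dust by (meson bounded_Int closed_Int compact_eq_bounded_closed)
qed

lemma card_cube_codes_within:
  fixes q :: "'n::finite \<Rightarrow> nat"
  assumes "q \<in> cube_codes k"
  shows "card {p \<in> cube_codes (k + j). cube_corner (k + j) p \<in> triadic_cube k q} = 2^(j * CARD('n))"
proof -
  have "{p \<in> cube_codes (k + j). cube_corner (k + j) p \<in> triadic_cube k q}
      = PiE UNIV (\<lambda>i. {v \<in> cantor_codes (k + j). real v / 3^(k + j) \<in> triadic_interval k (q i)})"
    by (auto simp: cube_codes_def triadic_cube_def cube_corner_def PiE_UNIV_domain Pi_def)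
  then show ?thesis
    using assms card_cantor_codes_within
    by (simp add: card_PiE cube_codes_def power_mult)
qed

lemma triadic_cube_open_neighbourhood:
  assumes "q \<in> cube_codes k"
  shows "\<exists>V. open V \<and> triadic_cube k q \<subseteq> V \<and> V \<inter> cantor_dust \<subseteq> triadic_cube k q"
proof (intro exI conjI)
  let ?V = "box (\<chi> i. real (q i) / 3^k - 1 / 3^k) (\<chi> i. (real (q i) + 1) / 3^k + 1 / 3^k)"
  show "open ?V"
    by (rule open_box)
  show "triadic_cube k q \<subseteq> ?V"
  proof
    fix x assume x: "x \<in> triadic_cube k q"
    have "real (q i) / 3^k - 1 / 3^k < x $ i \<and> x $ i < (real (q i) + 1) / 3^k + 1 / 3^k" for i
    proof -
      have "x $ i \<in> triadic_interval k (q i)"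
        using x by (simp add: triadic_cube_def)
      moreover have "(0::real) < 1 / 3^k"
        by simp
      ultimately show ?thesis
        unfolding mem_triadic_interval by linarith
    qed
    then show "x \<in> ?V"
      by (simp add: mem_box_cart)
  qed
  show "?V \<inter> cantor_dust \<subseteq> triadic_cube k q"
    using cantor_dust_in_triadic_cube_if_near[OF _ assms] by (auto simp: mem_box_cart)
qed

lemma cantor_dust_Int_small_subset_triadic_cube:
  assumes "bounded U" "x0 \<in> U \<inter> cantor_dust" "k = 0 \<or> diameter U < 1 / 3^k"
  obtains q where "q \<in> cube_codes k" "U \<inter> cantor_dust \<subseteq> triadic_cube k q"
  using assms(3)
proof
  assume "k = 0"
  then show ?thesis
    using that cantor_dust_subset_unit_cube cube_codes_0 by blast
next
  assume small: "diameter U < 1 / 3^k"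
  obtain q where q: "q \<in> cube_codes k" "x0 \<in> triadic_cube k q"
    using assms(2) cantor_dust_in_triadic_cube by blast
  have "x \<in> triadic_cube k q" if x: "x \<in> U \<inter> cantor_dust" for x
  proof (rule cantor_dust_in_triadic_cube_if_near)
    fix i
    have "\<bar>x $ i - x0 $ i\<bar> \<le> dist x x0"
      using component_le_norm_cart[of "x - x0" i] by (simp add: dist_norm)
    also have "\<dots> \<le> diameter U"
      using diameter_bounded_bound[OF assms(1)] x assms(2) by auto
    moreover have "x0 $ i \<in> triadic_interval k (q i)"
      using q(2) by (simp add: triadic_cube_def)
    ultimately show "real (q i) / 3^k - 1 / 3^k < x $ i \<and> x $ i < (real (q i) + 1) / 3^k + 1 / 3^k"
      using small by (auto simp: mem_triadic_interval abs_le_iff)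
  qed (use x q in auto)
  then show ?thesis
    using that q(1) by blast
qed

section \<open>Hausdorff measure and dimension of the dust\<close>

lemma hgauge_le_powr:
  assumes "s > 0" "bounded U" "diameter U \<le> D"
  shows "hgauge s U \<le> ennreal (D powr s)"
  using assms diameter_ge_0[OF assms(2)]
  by (auto simp: hgauge_def intro!: ennreal_leI powr_mono2)

definition hgauge_real :: "real \<Rightarrow> 'a::metric_space set \<Rightarrow> real" where
  "hgauge_real s U = (if U = {} then 0 else if diameter U = 0 then (if s = 0 then 1 else 0)
                      else diameter U powr s)"

lemma hgauge_eq_ennreal: "hgauge s U = ennreal (hgauge_real s U)"
  by (simp add: hgauge_def hgauge_real_def)

lemma hgauge_real_nonneg: "hgauge_real s U \<ge> 0"
  by (simp add: hgauge_real_def)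

lemma hausdorff_pre_le_finite_cover:
  assumes "finite B" "A \<subseteq> (\<Union>p\<in>B. f p)" "\<And>p. p \<in> B \<Longrightarrow> bounded (f p) \<and> diameter (f p) \<le> \<delta>"
    and "\<delta> \<ge> 0"
  shows "hausdorff_pre s \<delta> A \<le> (\<Sum>p\<in>B. hgauge s (f p))"
proof -
  obtain h where h: "bij_betw h {..<card B} B"
    using ex_bij_betw_nat_finite[OF assms(1)] atLeast0LessThan by auto
  define U where "U i = (if i < card B then f (h i) else {})" for i
  have "A \<subseteq> (\<Union>i. U i)"
  proof
    fix x assume "x \<in> A"
    then obtain p where p: "p \<in> B" "x \<in> f p"
      using assms(2) by blast
    then obtain i where "i < card B" "h i = p"
      using h by (metis bij_betw_imp_surj_on imageE lessThan_iff)
    then show "x \<in> (\<Union>i. U i)"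
      using p by (auto simp: U_def)
  qed
  moreover have "bounded (U i) \<and> diameter (U i) \<le> \<delta>" for i
    using assms(3,4) bij_betwE[OF h] by (auto simp: U_def)
  ultimately have "hausdorff_pre s \<delta> A \<le> (\<Sum>i. hgauge s (U i))"
    unfolding hausdorff_pre_def by (intro INF_lower) auto
  also have "\<dots> = (\<Sum>i<card B. hgauge s (U i))"
    by (rule suminf_finite) (auto simp: U_def hgauge_def)
  also have "\<dots> = (\<Sum>i<card B. hgauge s (f (h i)))"
    by (rule sum.cong) (auto simp: U_def)
  also have "\<dots> = (\<Sum>p\<in>B. hgauge s (f p))"
    by (rule sum.reindex_bij_betw[OF h])
  finally show ?thesis .
qed

lemma hausdorff_pre_mono: "A \<subseteq> B \<Longrightarrow> hausdorff_pre s \<delta> A \<le> hausdorff_pre s \<delta> B"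
  unfolding hausdorff_pre_def by (rule INF_superset_mono) auto

lemma hausdorff_pre_le_hausdorff_measure: "\<delta> > 0 \<Longrightarrow> hausdorff_pre s \<delta> A \<le> hausdorff_measure s A"
  unfolding hausdorff_measure_def by (rule SUP_upper) simp

lemma hausdorff_measure_le:
  "(\<And>\<delta>. \<delta> > 0 \<Longrightarrow> hausdorff_pre s \<delta> A \<le> c) \<Longrightarrow> hausdorff_measure s A \<le> c"
  unfolding hausdorff_measure_def by (rule SUP_least) simp

definition cantor_dust_dim :: "'n::finite itself \<Rightarrow> real" where
  "cantor_dust_dim _ = real CARD('n) * ln 2 / ln 3"

lemma cantor_dust_dim_pos: "cantor_dust_dim TYPE('n::finite) > 0"
  by (simp add: cantor_dust_dim_def)

lemma three_powr_ln_ratio: "3 powr (real d * ln 2 / ln 3) = (2::real)^d"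
  by (simp add: powr_def exp_of_nat_mult)

lemma inverse_three_pow_powr_ln_ratio: "(1 / 3^k) powr (real d * ln 2 / ln 3) = 1 / (2::real)^(k * d)"
proof -
  have "(1 / 3^k :: real) powr (real d * ln 2 / ln 3) = 1 / (3 powr (real d * ln 2 / ln 3))^k"
    by (simp add: powr_divide powr_realpow[symmetric] powr_powr mult.commute)
  then show ?thesis
    by (simp add: three_powr_ln_ratio power_mult[symmetric] mult.commute)
qed

lemma exists_triadic_scale:
  fixes y :: real
  assumes "0 < y" "y < 1"
  obtains k where "1 / 3^Suc k \<le> y" "y < 1 / 3^k"
proof -
  define P where "P k \<longleftrightarrow> 1 / 3^Suc k \<le> y" for k :: nat
  obtain n where "(1/3::real)^n < y"
    using real_arch_pow_inv[OF assms(1), of "1/3"] by auto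
  moreover have "(1/3::real)^Suc n \<le> (1/3)^n"
    by (rule power_decreasing) auto
  ultimately have "P n"
    by (simp add: P_def power_one_over)
  define k where "k = (LEAST k. P k)"
  have "P k"
    unfolding k_def by (rule LeastI[of P n]) fact
  moreover have "y < 1 / 3^k"
  proof (cases k)
    case (Suc k')
    then have "\<not> P k'"
      using not_less_Least[of k' P] by (simp add: k_def)
    then show ?thesis
      by (simp add: P_def Suc)
  qed (use assms in simp)
  ultimately show ?thesis
    using that by (simp add: P_def)
qed

lemma inverse_two_pow_le_powr:
  assumes "0 \<le> t" "t \<le> cantor_dust_dim TYPE('n::finite)" "1 / 3^k \<le> y"
  shows "1 / 2^(k * CARD('n)) \<le> y powr t"
proof -
  have "1 / 2^(k * CARD('n)) = (1 / 3^k :: real) powr cantor_dust_dim TYPE('n)"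
    by (simp add: cantor_dust_dim_def inverse_three_pow_powr_ln_ratio)
  also have "\<dots> \<le> (1 / 3^k) powr t"
    using assms(2) by (rule powr_mono') simp_all
  also have "\<dots> \<le> y powr t"
    using assms(1,3) by (intro powr_mono2) simp_all
  finally show ?thesis .
qed

text \<open>The error term \<open>\<zeta>\<close> takes care of sets of diameter zero, whose gauge vanishes for \<open>t > 0\<close>.\<close>
lemma cantor_dust_Int_subset_triadic_cube_of_gauge:
  fixes U :: "(real^'n::finite) set"
  assumes "bounded U" "x0 \<in> U \<inter> cantor_dust"
    and "0 \<le> t" "t \<le> cantor_dust_dim TYPE('n)" "\<zeta> > 0"
  obtains k q where "q \<in> cube_codes k" "U \<inter> cantor_dust \<subseteq> triadic_cube k q"
    "1 / 2^(k * CARD('n)) \<le> 3 powr t * hgauge_real t U + \<zeta>"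
proof -
  have "U \<noteq> {}"
    using assms(2) by auto
  have gauge_nonneg: "0 \<le> 3 powr t * hgauge_real t U"
    by (simp add: hgauge_real_nonneg)
  show ?thesis
  proof (cases "diameter U = 0")
    case True
    obtain k where k: "(1/2::real)^k < \<zeta>"
      using real_arch_pow_inv[OF assms(5), of "1/2"] by auto
    obtain q where "q \<in> cube_codes k" "U \<inter> cantor_dust \<subseteq> triadic_cube k q"
      using cantor_dust_Int_small_subset_triadic_cube[OF assms(1,2), of k] True by auto
    moreover have "1 / 2^(k * CARD('n)) \<le> (1/2::real)^k"
      by (simp add: power_one_over frac_le power_increasing)
    ultimately show ?thesis
      using that k gauge_nonneg by force
  next
    case False
    then have D: "diameter U > 0" "hgauge_real t U = diameter U powr t"
      using diameter_ge_0[OF assms(1)] \<open>U \<noteq> {}\<close> by (auto simp: hgauge_real_def)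
    obtain k where k: "k = 0 \<or> diameter U < 1 / 3^k" "1 / 3^k \<le> 3 * diameter U"
    proof (cases "diameter U < 1/3")
      case True
      then obtain k where "1 / 3^Suc k \<le> diameter U" "diameter U < 1 / 3^k"
        using exists_triadic_scale[OF D(1)] by auto
      then show ?thesis
        using that[of k] by auto
    qed (use that[of 0] in auto)
    obtain q where "q \<in> cube_codes k" "U \<inter> cantor_dust \<subseteq> triadic_cube k q"
      using cantor_dust_Int_small_subset_triadic_cube[OF assms(1,2) k(1)] .
    moreover have "1 / 2^(k * CARD('n)) \<le> (3 * diameter U) powr t"
      using inverse_two_pow_le_powr[OF assms(3,4) k(2)] .
    ultimately show ?thesis
      using that assms(5) D(2) by (force simp: powr_mult)
  qed
qed

text \<open>Count the corners of the cubes of a common fine level m: each cube of F contains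
  2^((m - n) d) of them, all in the dust, while the i-th covering cube contains only
  2^((m - k_i) d).\<close>
lemma card_cube_codes_le_cover_weight:
  fixes F :: "('n::finite \<Rightarrow> nat) set"
  assumes F: "F \<subseteq> cube_codes n" and I: "finite I"
    and qq: "\<And>i. i \<in> I \<Longrightarrow> qq i \<in> cube_codes (kk i)"
    and cover: "cantor_dust \<inter> (\<Union>p\<in>F. triadic_cube n p) \<subseteq> (\<Union>i\<in>I. triadic_cube (kk i) (qq i))"
  shows "real (card F) / 2^(n * CARD('n)) \<le> (\<Sum>i\<in>I. 1 / 2^(kk i * CARD('n)))"
proof -
  define d where "d = CARD('n)"
  define m where "m = n + sum kk I"
  have kk_le: "kk i \<le> m" if "i \<in> I" for i
    using member_le_sum[of i I kk] that I by (simp add: m_def)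
  define below where "below k q = {p \<in> cube_codes m. cube_corner m p \<in> triadic_cube k q}"
    for k and q :: "'n \<Rightarrow> nat"
  have finite_below: "finite (below k q)" for k q
    using finite_cube_codes[of m] unfolding below_def by (rule finite_subset[rotated]) blast
  have card_below: "card (below k q) = 2^((m - k) * d)" if "k \<le> m" "q \<in> cube_codes k" for k q
    using card_cube_codes_within[OF that(2), of "m - k"] that(1) by (simp add: below_def d_def)
  have "card F * 2^((m - n) * d) = (\<Sum>q\<in>F. card (below n q))"
    using F card_below[of n] by (simp add: m_def subset_iff)
  also have "\<dots> = card (\<Union>q\<in>F. below n q)"
    using F finite_subset[OF F finite_cube_codes] finite_below triadic_cube_unique[of _ n]
    by (intro card_UN_disjoint[symmetric]) (auto simp: below_def, blast)
  also have "\<dots> \<le> card (\<Union>i\<in>I. below (kk i) (qq i))"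
    using cover cube_corner_in_cantor_dust I finite_below
    by (intro card_mono) (auto simp: below_def, blast)
  also have "\<dots> \<le> (\<Sum>i\<in>I. card (below (kk i) (qq i)))"
    using I by (rule card_UN_le)
  also have "\<dots> = (\<Sum>i\<in>I. 2^((m - kk i) * d))"
    using kk_le qq card_below by simp
  finally have "real (card F * 2^((m - n) * d)) \<le> real (\<Sum>i\<in>I. 2^((m - kk i) * d))"
    by (rule of_nat_mono)
  moreover have split: "(2::real)^((m - k) * d) = 2^(m * d) / 2^(k * d)" if "k \<le> m" for k
    using that by (simp add: diff_mult_distrib power_diff)
  moreover have "(\<Sum>i\<in>I. (2::real)^((m - kk i) * d)) = 2^(m * d) * (\<Sum>i\<in>I. 1 / 2^(kk i * d))"
    using kk_le by (simp add: split sum_distrib_left)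
  ultimately have "2^(m * d) * (real (card F) / 2^(n * d)) \<le> 2^(m * d) * (\<Sum>i\<in>I. 1 / 2^(kk i * d))"
    using split[of n] by (simp add: m_def ac_simps)
  then show ?thesis
    unfolding d_def by (rule mult_left_le_imp_le) simp
qed

text \<open>Triadic cubes are not open, but their traces on the dust are relatively open.\<close>
lemma finite_subcover_triadic_cubes:
  fixes E :: "(real^'n::finite) set"
  assumes "compact E" "E \<subseteq> cantor_dust" "E \<subseteq> (\<Union>i\<in>J. triadic_cube (kk i) (qq i))"
    and "\<And>i. i \<in> J \<Longrightarrow> qq i \<in> cube_codes (kk i)"
  obtains I where "I \<subseteq> J" "finite I" "E \<subseteq> (\<Union>i\<in>I. triadic_cube (kk i) (qq i))"
proof -
  have "\<exists>V. open V \<and> triadic_cube (kk i) (qq i) \<subseteq> V \<and> V \<inter> cantor_dust \<subseteq> triadic_cube (kk i) (qq i)"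
    if "i \<in> J" for i
    using assms(4)[OF that] by (rule triadic_cube_open_neighbourhood)
  then obtain V where V: "\<And>i. i \<in> J \<Longrightarrow> open (V i) \<and> triadic_cube (kk i) (qq i) \<subseteq> V i \<and>
      V i \<inter> cantor_dust \<subseteq> triadic_cube (kk i) (qq i)"
    by metis
  have EV: "E \<subseteq> (\<Union>i\<in>J. V i)"
    using assms(3) V by blast
  from assms(1) obtain I where I: "I \<subseteq> J" "finite I" "E \<subseteq> (\<Union>i\<in>I. V i)"
    by (rule compactE_image[OF _ _ EV]) (use V in blast)
  have "E \<subseteq> (\<Union>i\<in>I. triadic_cube (kk i) (qq i))"
  proof
    fix x assume "x \<in> E"
    then obtain i where "i \<in> I" "x \<in> V i"
      using I(3) by blast
    then show "x \<in> (\<Union>i\<in>I. triadic_cube (kk i) (qq i))"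
      using V I(1) assms(2) \<open>x \<in> E\<close> by blast
  qed
  then show ?thesis
    using that I(1,2) by blast
qed

lemma sum_le_suminf_add_geometric:
  fixes g :: "nat \<Rightarrow> real"
  assumes "finite I" "summable g" "\<And>i. 0 \<le> g i" "0 \<le> c" "0 \<le> \<eta>"
  shows "(\<Sum>i\<in>I. c * g i + \<eta> / 2 * (1/2)^i) \<le> c * (\<Sum>i. g i) + \<eta>"
proof -
  have "(\<Sum>i\<in>I. c * g i + \<eta> / 2 * (1/2)^i) = c * (\<Sum>i\<in>I. g i) + (\<Sum>i\<in>I. \<eta> / 2 * (1/2)^i)"
    by (simp add: sum.distrib sum_distrib_left)
  also have "\<dots> \<le> c * (\<Sum>i. g i) + (\<Sum>i. \<eta> / 2 * (1/2)^i)"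
  proof (intro add_mono mult_left_mono)
    show "(\<Sum>i\<in>I. g i) \<le> (\<Sum>i. g i)"
      using assms(2,1) by (rule sum_le_suminf) (simp add: assms(3))
    show "(\<Sum>i\<in>I. \<eta> / 2 * (1/2)^i) \<le> (\<Sum>i. \<eta> / 2 * (1/2)^i)"
      using assms(1,5) by (intro sum_le_suminf) (auto intro!: summable_mult summable_geometric)
  qed (rule assms(4))
  also have "(\<Sum>i. \<eta> / 2 * (1/2::real)^i) = \<eta>"
    using suminf_mult[OF summable_geometric, of "1/2::real" "\<eta> / 2"] suminf_geometric[of "1/2::real"]
    by simp
  finally show ?thesis .
qed

lemma card_cube_codes_le_gauge_sum:
  fixes F :: "('n::finite \<Rightarrow> nat) set" and U :: "nat \<Rightarrow> (real^'n) set"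
  assumes F: "F \<subseteq> cube_codes n" and t: "0 \<le> t" "t \<le> cantor_dust_dim TYPE('n)"
    and cover: "cantor_dust \<inter> (\<Union>p\<in>F. triadic_cube n p) \<subseteq> (\<Union>i. U i)"
    and bounded: "\<And>i. bounded (U i)" and summable: "summable (\<lambda>i. hgauge_real t (U i))"
    and \<eta>: "\<eta> > 0"
  shows "real (card F) / 2^(n * CARD('n)) \<le> 3 powr t * (\<Sum>i. hgauge_real t (U i)) + \<eta>"
proof -
  define E where "E = cantor_dust \<inter> (\<Union>p\<in>F. triadic_cube n p)"
  define J where "J = {i. U i \<inter> E \<noteq> {}}"
  define \<zeta> where "\<zeta> i = \<eta> / 2 * (1/2)^i" for i :: nat
  have "\<exists>k q. q \<in> cube_codes k \<and> U i \<inter> cantor_dust \<subseteq> triadic_cube k q \<and>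
      1 / 2^(k * CARD('n)) \<le> 3 powr t * hgauge_real t (U i) + \<zeta> i" if i: "i \<in> J" for i
  proof -
    obtain x0 where x0: "x0 \<in> U i \<inter> cantor_dust"
      using i unfolding J_def E_def by blast
    have "\<zeta> i > 0"
      using \<eta> by (simp add: \<zeta>_def)
    obtain k q where "q \<in> cube_codes k" "U i \<inter> cantor_dust \<subseteq> triadic_cube k q"
      "1 / 2^(k * CARD('n)) \<le> 3 powr t * hgauge_real t (U i) + \<zeta> i"
      by (rule cantor_dust_Int_subset_triadic_cube_of_gauge[OF bounded x0 t \<open>\<zeta> i > 0\<close>])
    then show ?thesis
      by blast
  qed
  then obtain kk qq where kq: "\<And>i. i \<in> J \<Longrightarrow> qq i \<in> cube_codes (kk i) \<and>
      U i \<inter> cantor_dust \<subseteq> triadic_cube (kk i) (qq i) \<and>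
      1 / 2^(kk i * CARD('n)) \<le> 3 powr t * hgauge_real t (U i) + \<zeta> i"
    by metis
  have EJ: "E \<subseteq> (\<Union>i\<in>J. triadic_cube (kk i) (qq i))"
  proof
    fix x assume x: "x \<in> E"
    then obtain i where "x \<in> U i"
      using cover by (auto simp: E_def)
    with x have "i \<in> J"
      by (auto simp: J_def)
    moreover have "x \<in> triadic_cube (kk i) (qq i)"
      using kq[OF \<open>i \<in> J\<close>] x \<open>x \<in> U i\<close> by (auto simp: E_def)
    ultimately show "x \<in> (\<Union>i\<in>J. triadic_cube (kk i) (qq i))"
      by blast
  qed
  have "compact E"
    unfolding E_def
    by (rule compact_cantor_dust_Int_cubes) (rule finite_subset[OF F finite_cube_codes])
  moreover have "E \<subseteq> cantor_dust"
    by (simp add: E_def)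
  moreover have "qq i \<in> cube_codes (kk i)" if "i \<in> J" for i
    using kq[OF that] by blast
  ultimately obtain I where I: "I \<subseteq> J" "finite I" "E \<subseteq> (\<Union>i\<in>I. triadic_cube (kk i) (qq i))"
    using EJ by (elim finite_subcover_triadic_cubes)
  then have "real (card F) / 2^(n * CARD('n)) \<le> (\<Sum>i\<in>I. 1 / 2^(kk i * CARD('n)))"
    using I(1,2) kq by (intro card_cube_codes_le_cover_weight[OF F]) (auto simp: E_def)
  also have "\<dots> \<le> (\<Sum>i\<in>I. 3 powr t * hgauge_real t (U i) + \<zeta> i)"
    using I kq by (intro sum_mono) auto
  also have "\<dots> \<le> 3 powr t * (\<Sum>i. hgauge_real t (U i)) + \<eta>"
    unfolding \<zeta>_def using I(2) summable \<eta>
    by (intro sum_le_suminf_add_geometric) (simp_all add: hgauge_real_nonneg)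
  finally show ?thesis .
qed

lemma hausdorff_pre_cantor_dust_Int_cubes_ge:
  fixes F :: "('n::finite \<Rightarrow> nat) set"
  assumes F: "F \<subseteq> cube_codes n" and t: "0 \<le> t" "t \<le> cantor_dust_dim TYPE('n)"
  shows "ennreal (real (card F) / 2^(n * CARD('n)) / 3 powr t)
           \<le> hausdorff_pre t \<delta> (cantor_dust \<inter> (\<Union>p\<in>F. triadic_cube n p))"
  unfolding hausdorff_pre_def
proof (rule INF_greatest)
  fix U :: "nat \<Rightarrow> (real^'n) set"
  assume "U \<in> {U. cantor_dust \<inter> (\<Union>p\<in>F. triadic_cube n p) \<subseteq> (\<Union>i. U i) \<and>
                  (\<forall>i. bounded (U i) \<and> diameter (U i) \<le> \<delta>)}"
  then have cover: "cantor_dust \<inter> (\<Union>p\<in>F. triadic_cube n p) \<subseteq> (\<Union>i. U i)"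
    and bounded: "\<And>i. bounded (U i)"
    by auto
  show "ennreal (real (card F) / 2^(n * CARD('n)) / 3 powr t) \<le> (\<Sum>i. hgauge t (U i))"
  proof (cases "summable (\<lambda>i. hgauge_real t (U i))")
    case False
    then have "(\<Sum>i. ennreal (hgauge_real t (U i))) = top"
      using summable_suminf_not_top[of "\<lambda>i. hgauge_real t (U i)"] hgauge_real_nonneg by blast
    then show ?thesis
      by (simp add: hgauge_eq_ennreal)
  next
    case True
    have "real (card F) / 2^(n * CARD('n)) \<le> 3 powr t * (\<Sum>i. hgauge_real t (U i))"
      by (rule field_le_epsilon) (rule card_cube_codes_le_gauge_sum[OF F t cover bounded True])
    then have "real (card F) / 2^(n * CARD('n)) / 3 powr t \<le> (\<Sum>i. hgauge_real t (U i))"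
      by (simp add: pos_divide_le_eq mult_ac)
    moreover have "(\<Sum>i. hgauge t (U i)) = ennreal (\<Sum>i. hgauge_real t (U i))"
      unfolding hgauge_eq_ennreal by (rule suminf_ennreal2[OF hgauge_real_nonneg True])
    ultimately show ?thesis
      by (simp add: ennreal_leI)
  qed
qed

lemma hausdorff_pre_le_card_cubes:
  fixes A :: "(real^'n::finite) set"
  assumes "B \<subseteq> cube_codes m" "A \<subseteq> (\<Union>p\<in>B. triadic_cube m p)"
    and "real CARD('n) / 3^m \<le> \<delta>" "t > 0"
  shows "hausdorff_pre t \<delta> A \<le> ennreal (real (card B) * (real CARD('n) / 3^m) powr t)"
proof -
  have "hausdorff_pre t \<delta> A \<le> (\<Sum>p\<in>B. hgauge t (triadic_cube m p))"
  proof (rule hausdorff_pre_le_finite_cover)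
    show "finite B"
      using assms(1) finite_cube_codes by (rule finite_subset)
    show "bounded (triadic_cube m p) \<and> diameter (triadic_cube m p) \<le> \<delta>" for p :: "'n \<Rightarrow> nat"
      using bounded_triadic_cube diameter_triadic_cube[of m p] assms(3) by auto
  next
    show "0 \<le> \<delta>"
      by (rule order_trans[OF _ assms(3)]) simp
  qed (use assms(2) in auto)
  also have "\<dots> \<le> (\<Sum>p\<in>B. ennreal ((real CARD('n) / 3^m) powr t))"
    using assms(4) by (intro sum_mono hgauge_le_powr bounded_triadic_cube diameter_triadic_cube)
  also have "\<dots> = ennreal (real (card B) * (real CARD('n) / 3^m) powr t)"
    by (simp add: ennreal_mult' ennreal_of_nat_eq_real_of_nat)
  finally show ?thesis .
qed

lemma card_cube_codes_powr:
  "real (card (cube_codes m :: ('n::finite \<Rightarrow> nat) set)) * (real CARD('n) / 3^m) powr t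
    = real CARD('n) powr t * (2^CARD('n) / 3 powr t)^m"
proof -
  have "(real CARD('n) / 3^m) powr t = real CARD('n) powr t / (3 powr t)^m"
    by (simp add: powr_divide powr_realpow[symmetric] powr_powr mult.commute)
  then show ?thesis
    by (simp add: card_cube_codes power_mult[symmetric] mult.commute power_divide)
qed

lemma hausdorff_measure_cantor_dust_eq_0:
  assumes "t > cantor_dust_dim TYPE('n::finite)"
  shows "hausdorff_measure t (cantor_dust :: (real^'n) set) = 0"
proof -
  define d where "d = real CARD('n)"
  define r where "r = 2^CARD('n) / 3 powr t"
  have "t > 0"
    using assms cantor_dust_dim_pos[where 'n='n] by linarith
  have "3 powr cantor_dust_dim TYPE('n) < 3 powr t"
    using assms by simp
  then have r: "0 < r" "r < 1"
    using three_powr_ln_ratio[of "CARD('n)"] by (auto simp: r_def cantor_dust_dim_def)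
  have small: "hausdorff_pre t \<delta> (cantor_dust :: (real^'n) set) \<le> ennreal \<eta>"
    if "\<delta> > 0" "\<eta> > 0" for \<delta> \<eta>
  proof -
    have "(\<lambda>m. d powr t * r^m) \<longlonglongrightarrow> 0"
      using r by (intro tendsto_mult_right_zero LIMSEQ_power_zero) simp
    moreover have "(\<lambda>m. d * (1/3)^m) \<longlonglongrightarrow> 0"
      by (intro tendsto_mult_right_zero LIMSEQ_power_zero) simp
    ultimately have "\<forall>\<^sub>F m in sequentially. d powr t * r^m < \<eta> \<and> d * (1/3)^m < \<delta>"
      using that by (intro eventually_conj order_tendstoD(2)) auto
    then obtain m where m: "d powr t * r^m < \<eta>" "d / 3^m < \<delta>"
      by (auto simp: eventually_sequentially power_one_over)
    have "hausdorff_pre t \<delta> (cantor_dust :: (real^'n) set)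
        \<le> ennreal (real (card (cube_codes m :: ('n \<Rightarrow> nat) set)) * (d / 3^m) powr t)"
      unfolding d_def
    proof (rule hausdorff_pre_le_card_cubes[OF order_refl _ _ \<open>t > 0\<close>])
      show "cantor_dust \<subseteq> (\<Union>p\<in>cube_codes m. triadic_cube m p)"
        using cantor_dust_in_triadic_cube by blast
    qed (use m(2) in \<open>simp add: d_def\<close>)
    also have "\<dots> \<le> ennreal \<eta>"
      using m(1) by (simp add: card_cube_codes_powr d_def r_def ennreal_leI)
    finally show ?thesis .
  qed
  have "hausdorff_measure t (cantor_dust :: (real^'n) set) \<le> 0"
  proof (rule hausdorff_measure_le)
    fix \<delta> :: real assume "\<delta> > 0"
    show "hausdorff_pre t \<delta> (cantor_dust :: (real^'n) set) \<le> 0"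
      by (rule ennreal_le_epsilon) (use small \<open>\<delta> > 0\<close> in simp)
  qed
  then show ?thesis
    by simp
qed

lemma hausdorff_measure_cantor_dust_ge:
  assumes "0 \<le> t" "t \<le> cantor_dust_dim TYPE('n::finite)"
  shows "ennreal (1 / 3 powr t) \<le> hausdorff_measure t (cantor_dust :: (real^'n) set)"
proof -
  have "ennreal (1 / 3 powr t) \<le> hausdorff_pre t 1 (cantor_dust :: (real^'n) set)"
    using hausdorff_pre_cantor_dust_Int_cubes_ge[OF order_refl assms, where n=0 and \<delta>=1]
    by (simp add: cube_codes_0 Int_absorb2[OF cantor_dust_subset_unit_cube])
  also have "\<dots> \<le> hausdorff_measure t (cantor_dust :: (real^'n) set)"
    by (rule hausdorff_pre_le_hausdorff_measure) simp
  finally show ?thesis .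
qed

lemma hausdorff_dim_cantor_dust:
  "hausdorff_dim (cantor_dust :: (real^'n::finite) set) = cantor_dust_dim TYPE('n)"
proof -
  have "{t. t \<ge> 0 \<and> hausdorff_measure t (cantor_dust :: (real^'n) set) = 0}
      = {cantor_dust_dim TYPE('n)<..}"
  proof (intro equalityI subsetI)
    fix t assume t: "t \<in> {t. t \<ge> 0 \<and> hausdorff_measure t (cantor_dust :: (real^'n) set) = 0}"
    show "t \<in> {cantor_dust_dim TYPE('n)<..}"
    proof (rule ccontr)
      assume "t \<notin> {cantor_dust_dim TYPE('n)<..}"
      then have "ennreal (1 / 3 powr t) \<le> 0"
        using t hausdorff_measure_cantor_dust_ge[of t, where 'n='n] by auto
      then show False
        by simp
    qed
  next
    fix t assume "t \<in> {cantor_dust_dim TYPE('n)<..}"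
    then show "t \<in> {t. t \<ge> 0 \<and> hausdorff_measure t (cantor_dust :: (real^'n) set) = 0}"
      using hausdorff_measure_cantor_dust_eq_0[of t] cantor_dust_dim_pos[where 'n='n] by auto
  qed
  then show ?thesis
    by (simp add: hausdorff_dim_def)
qed

section \<open>Neighbourhoods of hyperplanes\<close>

definition slice_codes :: "'n::finite \<Rightarrow> nat \<Rightarrow> ('n \<Rightarrow> nat) set" where
  "slice_codes i0 m = {p \<in> cube_codes m. p i0 = 0}"

lemma slice_codes_eq_PiE:
  "slice_codes i0 m = PiE UNIV (\<lambda>i. if i = i0 then {0} else cantor_codes m)"
  using zero_in_cantor_codes by (auto simp: slice_codes_def cube_codes_def PiE_UNIV_domain Pi_def)

lemma finite_slice_codes: "finite (slice_codes i0 m)"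
  unfolding slice_codes_eq_PiE by (rule finite_PiE) (simp_all add: finite_cantor_codes)

lemma card_slice_codes: "card (slice_codes (i0::'n::finite) m) = 2^(m * (CARD('n) - 1))"
proof -
  have "card (slice_codes i0 m) = (\<Prod>i\<in>UNIV. card (if i = i0 then {0} else cantor_codes m))"
    unfolding slice_codes_eq_PiE by (rule card_PiE) simp
  also have "\<dots> = (\<Prod>i\<in>UNIV. if i = i0 then 1 else 2^m)"
    by (rule prod.cong) (auto simp: card_cantor_codes)
  also have "\<dots> = (\<Prod>i\<in>UNIV - {i0}. 2^m)"
    by (subst prod.remove[of UNIV i0]) auto
  finally show ?thesis
    by (simp add: card_Diff_singleton power_mult)
qed

lemma obtain_max_abs_component:
  fixes a :: "real^'n::finite"
  assumes "a \<noteq> 0"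
  obtains i0 where "\<And>i. \<bar>a $ i\<bar> \<le> \<bar>a $ i0\<bar>" "a $ i0 \<noteq> 0"
proof -
  have "Max (range (\<lambda>i. \<bar>a $ i\<bar>)) \<in> range (\<lambda>i. \<bar>a $ i\<bar>)"
    by (rule Max_in) auto
  then obtain i0 where i0: "Max (range (\<lambda>i. \<bar>a $ i\<bar>)) = \<bar>a $ i0\<bar>"
    by blast
  have le: "\<bar>a $ i\<bar> \<le> \<bar>a $ i0\<bar>" for i
    unfolding i0[symmetric] by (rule Max_ge) auto
  obtain k where "a $ k \<noteq> 0"
    using assms by (metis vec_eq_iff zero_index)
  then have "a $ i0 \<noteq> 0"
    using le[of k] by auto
  then show ?thesis
    using that le by blast
qed

lemma inner_near_cube_corner:
  fixes a x :: "real^'n::finite"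
  assumes x: "x \<in> triadic_cube m p" and A: "\<And>i. \<bar>a $ i\<bar> \<le> A"
  shows "\<bar>a \<bullet> x - a \<bullet> cube_corner m p\<bar> \<le> real CARD('n) * A / 3^m"
proof -
  have "\<bar>a \<bullet> x - a \<bullet> cube_corner m p\<bar> = \<bar>\<Sum>i\<in>UNIV. a $ i * (x $ i - real (p i) / 3^m)\<bar>"
    by (simp add: inner_vec_def cube_corner_def sum_subtractf right_diff_distrib)
  also have "\<dots> \<le> (\<Sum>i\<in>UNIV. \<bar>a $ i * (x $ i - real (p i) / 3^m)\<bar>)"
    by (rule sum_abs)
  also have "\<dots> \<le> (\<Sum>i\<in>(UNIV::'n set). A * (1 / 3^m))"
  proof (rule sum_mono)
    fix i
    have "x $ i \<in> triadic_interval m (p i)"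
      using x by (simp add: triadic_cube_def)
    then have "\<bar>x $ i - real (p i) / 3^m\<bar> \<le> 1 / 3^m"
      by (simp add: mem_triadic_interval add_divide_distrib abs_le_iff)
    then show "\<bar>a $ i * (x $ i - real (p i) / 3^m)\<bar> \<le> A * (1 / 3^m)"
      unfolding abs_mult using A[of i] by (intro mult_mono) simp_all
  qed
  finally show ?thesis
    by simp
qed

text \<open>The second term inside the absolute value is the \<open>i\<^sub>0\<close>-th code forced by the other codes
  of \<open>p\<close> if the corner of the cube lay on the hyperplane \<open>a \<bullet> x = b\<close>; as \<open>|a\<^sub>i\<^sub>0|\<close> is maximal,
  the true code differs from it by \<open>O(3\<^sup>j)\<close>.\<close>
lemma code_near_hyperplane:
  fixes a x :: "real^'n::finite" and p :: "'n \<Rightarrow> nat"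
  assumes x: "x \<in> triadic_cube (n + j) p"
    and ax: "\<bar>a \<bullet> x - b\<bar> \<le> real CARD('n) * \<bar>a $ i0\<bar> * \<epsilon>"
    and amax: "\<And>i. \<bar>a $ i\<bar> \<le> \<bar>a $ i0\<bar>" and a0: "a $ i0 \<noteq> 0"
    and \<epsilon>: "\<epsilon> \<le> 1 / 3^n"
  shows "\<bar>real (p i0) - 3^(n + j) * (b - (\<Sum>i\<in>UNIV. a $ i * real ((p(i0 := 0)) i) / 3^(n + j))) / a $ i0\<bar>
           \<le> 2 * real CARD('n) * 3^j"
proof -
  define m where "m = n + j"
  define d where "d = real CARD('n)"
  define A where "A = \<bar>a $ i0\<bar>"
  define rest where "rest = (\<Sum>i\<in>UNIV. a $ i * real ((p(i0 := 0)) i) / 3^m)"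
  have "A > 0"
    using a0 by (simp add: A_def)
  have "a \<bullet> cube_corner m p - rest
      = (\<Sum>i\<in>UNIV. if i = i0 then a $ i0 * real (p i0) / 3^m else 0)"
    unfolding rest_def inner_vec_def cube_corner_def sum_subtractf[symmetric]
    by (intro sum.cong) auto
  then have "a \<bullet> cube_corner m p = a $ i0 * real (p i0) / 3^m + rest"
    by simp
  then have corner_close: "\<bar>a \<bullet> x - (a $ i0 * real (p i0) / 3^m + rest)\<bar> \<le> d * A / 3^m"
    using inner_near_cube_corner[of x m p a A] x amax by (simp add: m_def d_def A_def)
  have "\<bar>real (p i0) - 3^m * (b - rest) / a $ i0\<bar>
      = 3^m / A * \<bar>a $ i0 * real (p i0) / 3^m + rest - b\<bar>"
  proof -
    have "real (p i0) - 3^m * (b - rest) / a $ i0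
        = 3^m / a $ i0 * (a $ i0 * real (p i0) / 3^m + rest - b)"
      using a0 by (simp add: field_simps)
    then show ?thesis
      by (simp add: abs_mult A_def)
  qed
  also have "\<dots> \<le> 3^m / A * (d * A * \<epsilon> + d * A / 3^m)"
    using corner_close ax \<open>A > 0\<close> by (intro mult_left_mono) (auto simp: A_def d_def)
  also have "\<dots> = d * (3^m * \<epsilon> + 1)"
    using \<open>A > 0\<close> by (simp add: field_simps)
  also have "\<dots> \<le> d * (3^j + 3^j)"
  proof -
    have "3^m * \<epsilon> \<le> 3^m * (1 / 3^n)"
      using \<epsilon> by (intro mult_left_mono) auto
    also have "\<dots> = 3^j"
      by (simp add: m_def power_add)
    finally have "3^m * \<epsilon> + 1 \<le> 3^j + 3^j"
      using one_le_power[of "3::real" j] by linarith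
    then show ?thesis
      by (intro mult_left_mono) (simp_all add: d_def)
  qed
  finally show ?thesis
    by (simp add: m_def d_def rest_def)
qed

lemma abs_inner_sub_le_of_mem_open_nbhd:
  fixes a :: "real^'n::finite"
  assumes "x \<in> open_nbhd {x. a \<bullet> x = b} \<epsilon>" "\<And>i. \<bar>a $ i\<bar> \<le> \<bar>a $ i0\<bar>"
  shows "\<bar>a \<bullet> x - b\<bar> \<le> real CARD('n) * \<bar>a $ i0\<bar> * \<epsilon>"
proof -
  obtain y where y: "a \<bullet> y = b" "dist x y < \<epsilon>"
    using assms(1) by (auto simp: open_nbhd_def)
  have "norm a \<le> (\<Sum>i\<in>UNIV. \<bar>a $ i\<bar>)"
    by (rule norm_le_l1_cart)
  also have "\<dots> \<le> (\<Sum>i\<in>(UNIV::'n set). \<bar>a $ i0\<bar>)"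
    using assms(2) by (rule sum_mono)
  finally have "norm a \<le> real CARD('n) * \<bar>a $ i0\<bar>"
    by simp
  have "\<bar>a \<bullet> x - b\<bar> = \<bar>a \<bullet> (x - y)\<bar>"
    using y by (simp add: inner_diff_right)
  also have "\<dots> \<le> norm a * norm (x - y)"
    by (rule Cauchy_Schwarz_ineq2)
  also have "\<dots> \<le> real CARD('n) * \<bar>a $ i0\<bar> * \<epsilon>"
    using \<open>norm a \<le> real CARD('n) * \<bar>a $ i0\<bar>\<close> y(2) by (intro mult_mono) (auto simp: dist_norm)
  finally show ?thesis .
qed

lemma hyperplane_nbhd_cube_cover:
  fixes a :: "real^'n::finite"
  assumes a: "a \<noteq> 0" and \<epsilon>: "\<epsilon> \<le> 1 / 3^n"
  obtains B where "B \<subseteq> cube_codes (n + j)"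
    "open_nbhd {x. a \<bullet> x = b} \<epsilon> \<inter> cantor_dust \<subseteq> (\<Union>p\<in>B. triadic_cube (n + j) p)"
    "real (card B) \<le> (4 * real CARD('n) + 3) * 2^j * 2^((n + j) * (CARD('n) - 1))"
proof -
  define m where "m = n + j"
  define d where "d = real CARD('n)"
  obtain i0 where amax: "\<And>i. \<bar>a $ i\<bar> \<le> \<bar>a $ i0\<bar>" and a0: "a $ i0 \<noteq> 0"
    using obtain_max_abs_component[OF a] by blast
  define centre where
    "centre r = 3^m * (b - (\<Sum>i\<in>UNIV. a $ i * real (r i) / 3^m)) / a $ i0" for r :: "'n \<Rightarrow> nat"
  define W where "W r = {v \<in> cantor_codes m. \<bar>real v - centre r\<bar> \<le> 2 * d * 3^j}" for r
  define B where "B = (\<lambda>(r, v). r(i0 := v)) ` (SIGMA r:slice_codes i0 m. W r)"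
  show ?thesis
  proof (rule that)
    show "B \<subseteq> cube_codes (n + j)"
      by (auto simp: B_def W_def slice_codes_def cube_codes_def m_def)
    show "open_nbhd {x. a \<bullet> x = b} \<epsilon> \<inter> cantor_dust \<subseteq> (\<Union>p\<in>B. triadic_cube (n + j) p)"
    proof
      fix x assume x: "x \<in> open_nbhd {x. a \<bullet> x = b} \<epsilon> \<inter> cantor_dust"
      obtain p where p: "p \<in> cube_codes m" "x \<in> triadic_cube m p"
        using x cantor_dust_in_triadic_cube by blast
      have "\<bar>a \<bullet> x - b\<bar> \<le> real CARD('n) * \<bar>a $ i0\<bar> * \<epsilon>"
        using x amax by (auto intro: abs_inner_sub_le_of_mem_open_nbhd)
      then have "\<bar>real (p i0) - centre (p(i0 := 0))\<bar> \<le> 2 * d * 3^j"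
        using code_near_hyperplane[OF _ _ amax a0 \<epsilon>] p(2) by (simp add: centre_def m_def d_def)
      then have "p i0 \<in> W (p(i0 := 0))"
        using p(1) by (simp add: W_def cube_codes_def)
      moreover have "p(i0 := 0) \<in> slice_codes i0 m"
        using p(1) zero_in_cantor_codes by (simp add: slice_codes_def cube_codes_def)
      ultimately have "p \<in> B"
        unfolding B_def by (auto intro!: image_eqI[where x="(p(i0 := 0), p i0)"])
      then show "x \<in> (\<Union>p\<in>B. triadic_cube (n + j) p)"
        using p(2) by (auto simp: m_def)
    qed
    have finite_W: "finite (W r)" for r
      using finite_cantor_codes by (simp add: W_def)
    have "card B \<le> card (SIGMA r:slice_codes i0 m. W r)"
      unfolding B_def by (rule card_image_le) (simp add: finite_slice_codes finite_W)
    also have "\<dots> = (\<Sum>r\<in>slice_codes i0 m. card (W r))"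
      by (simp add: finite_slice_codes finite_W)
    finally have "real (card B) \<le> (\<Sum>r\<in>slice_codes i0 m. real (card (W r)))"
      by (metis of_nat_le_iff of_nat_sum)
    also have "\<dots> \<le> (\<Sum>r\<in>slice_codes i0 m. (2 * (2 * d) + 3) * 2^j)"
      unfolding W_def m_def
      by (intro sum_mono) (use card_cantor_codes_window[of "2 * d"] in \<open>simp add: d_def mult.assoc\<close>)
    also have "\<dots> = (4 * d + 3) * 2^j * 2^(m * (CARD('n) - 1))"
      by (simp add: card_slice_codes)
    finally show "real (card B) \<le> (4 * real CARD('n) + 3) * 2^j * 2^((n + j) * (CARD('n) - 1))"
      by (simp add: d_def m_def)
  qed
qed

lemma powr_cantor_dust_dim_level:
  "(real CARD('n::finite) / 3^m) powr cantor_dust_dim TYPE('n)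
    = real CARD('n) powr cantor_dust_dim TYPE('n) / 2^(m * CARD('n))"
proof -
  have "(real CARD('n) / 3^m) powr cantor_dust_dim TYPE('n)
      = real CARD('n) powr cantor_dust_dim TYPE('n) * (1 / 3^m) powr cantor_dust_dim TYPE('n)"
    by (simp add: powr_divide)
  then show ?thesis
    by (simp add: cantor_dust_dim_def inverse_three_pow_powr_ln_ratio)
qed

lemma hausdorff_measure_hyperplane_nbhd_le:
  fixes a :: "real^'n::finite"
  assumes a: "a \<noteq> 0" and \<epsilon>: "\<epsilon> \<le> 1 / 3^n"
  shows "hausdorff_measure (cantor_dust_dim TYPE('n)) (open_nbhd {x. a \<bullet> x = b} \<epsilon> \<inter> cantor_dust)
         \<le> ennreal ((4 * real CARD('n) + 3) * real CARD('n) powr cantor_dust_dim TYPE('n) / 2^n)"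
proof (rule hausdorff_measure_le)
  fix \<delta> :: real assume "\<delta> > 0"
  define d where "d = real CARD('n)"
  define s where "s = cantor_dust_dim TYPE('n)"
  have "(\<lambda>j. d * (1/3)^j) \<longlonglongrightarrow> 0"
    by (intro tendsto_mult_right_zero LIMSEQ_power_zero) simp
  then have "\<forall>\<^sub>F j in sequentially. d * (1/3)^j < \<delta>"
    using \<open>\<delta> > 0\<close> by (rule order_tendstoD(2))
  then obtain j where "d * (1/3)^j < \<delta>"
    by (auto simp: eventually_sequentially)
  moreover have "d / 3^(n + j) \<le> d * (1/3)^j"
    by (simp add: d_def power_add power_one_over divide_left_mono)
  ultimately have fine: "d / 3^(n + j) \<le> \<delta>"
    by linarith
  obtain B where B: "B \<subseteq> cube_codes (n + j)"
    "open_nbhd {x. a \<bullet> x = b} \<epsilon> \<inter> cantor_dust \<subseteq> (\<Union>p\<in>B. triadic_cube (n + j) p)"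
    "real (card B) \<le> (4 * d + 3) * 2^j * 2^((n + j) * (CARD('n) - 1))"
    using hyperplane_nbhd_cube_cover[OF a \<epsilon>] unfolding d_def by metis
  have "hausdorff_pre s \<delta> (open_nbhd {x. a \<bullet> x = b} \<epsilon> \<inter> cantor_dust)
      \<le> ennreal (real (card B) * (d / 3^(n + j)) powr s)"
    unfolding d_def s_def
    by (rule hausdorff_pre_le_card_cubes[OF B(1,2)]) (use fine cantor_dust_dim_pos in \<open>simp_all add: d_def\<close>)
  also have "real (card B) * (d / 3^(n + j)) powr s = real (card B) * d powr s / 2^((n + j) * CARD('n))"
    by (simp add: d_def s_def powr_cantor_dust_dim_level)
  also have "\<dots> \<le> (4 * d + 3) * 2^j * 2^((n + j) * (CARD('n) - 1)) * d powr s / 2^((n + j) * CARD('n))"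
    using B(3) by (intro divide_right_mono mult_right_mono) simp_all
  also have "\<dots> = (4 * d + 3) * d powr s / 2^n"
  proof -
    obtain c where c: "CARD('n) = Suc c"
      using zero_less_card_finite[where 'a='n] by (metis Suc_pred)
    have "(2::real)^((n + j) * CARD('n)) = 2^j * 2^((n + j) * (CARD('n) - 1)) * 2^n"
      unfolding c by (simp add: power_add algebra_simps)
    then show ?thesis
      by simp
  qed
  finally show "hausdorff_pre s \<delta> (open_nbhd {x. a \<bullet> x = b} \<epsilon> \<inter> cantor_dust)
      \<le> ennreal ((4 * real CARD('n) + 3) * real CARD('n) powr s / 2^n)"
    by (simp add: d_def ennreal_leI)
qed

lemma hausdorff_measure_coordinate_slab_ge:
  fixes i0 :: "'n::finite"
  assumes "1 / 3^n < \<epsilon>"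
  shows "ennreal (1 / 2^n / 3 powr cantor_dust_dim TYPE('n))
     \<le> hausdorff_measure (cantor_dust_dim TYPE('n)) (open_nbhd {x::real^'n. axis i0 1 \<bullet> x = 0} \<epsilon> \<inter> cantor_dust)"
proof -
  define s where "s = cantor_dust_dim TYPE('n)"
  define F where "F = slice_codes i0 n"
  have card_F: "real (card F) / 2^(n * CARD('n)) = 1 / 2^n"
  proof -
    obtain c where c: "CARD('n) = Suc c"
      using zero_less_card_finite[where 'a='n] by (metis Suc_pred)
    show ?thesis
      unfolding F_def card_slice_codes c by (simp add: power_add algebra_simps)
  qed
  have slab: "cantor_dust \<inter> (\<Union>p\<in>F. triadic_cube n p)
      \<subseteq> open_nbhd {x::real^'n. axis i0 1 \<bullet> x = 0} \<epsilon> \<inter> cantor_dust"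
  proof
    fix x :: "real^'n" assume x: "x \<in> cantor_dust \<inter> (\<Union>p\<in>F. triadic_cube n p)"
    then obtain p where p: "p \<in> F" "x \<in> triadic_cube n p"
      by auto
    have "p i0 = 0"
      using p(1) by (simp add: F_def slice_codes_def)
    moreover have "x $ i0 \<in> triadic_interval n (p i0)"
      using p(2) by (simp add: triadic_cube_def)
    ultimately have "\<bar>x $ i0\<bar> < \<epsilon>"
      using assms by (simp add: mem_triadic_interval)
    then have "dist x (x - axis i0 (x $ i0)) < \<epsilon>"
      by (simp add: dist_norm norm_eq_sqrt_inner inner_axis_axis)
    moreover have "axis i0 1 \<bullet> (x - axis i0 (x $ i0)) = 0"
      by (simp add: inner_diff_right inner_axis')
    ultimately show "x \<in> open_nbhd {x::real^'n. axis i0 1 \<bullet> x = 0} \<epsilon> \<inter> cantor_dust"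
      using x unfolding open_nbhd_def by blast
  qed
  have "ennreal (1 / 2^n / 3 powr s) = ennreal (real (card F) / 2^(n * CARD('n)) / 3 powr s)"
    by (simp add: card_F)
  also have "\<dots> \<le> hausdorff_pre s 1 (cantor_dust \<inter> (\<Union>p\<in>F. triadic_cube n p))"
    by (rule hausdorff_pre_cantor_dust_Int_cubes_ge)
      (auto simp: F_def slice_codes_def s_def less_imp_le[OF cantor_dust_dim_pos])
  also have "\<dots> \<le> hausdorff_pre s 1 (open_nbhd {x::real^'n. axis i0 1 \<bullet> x = 0} \<epsilon> \<inter> cantor_dust)"
    using slab by (rule hausdorff_pre_mono)
  also have "\<dots> \<le> hausdorff_measure s (open_nbhd {x::real^'n. axis i0 1 \<bullet> x = 0} \<epsilon> \<inter> cantor_dust)"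
    by (rule hausdorff_pre_le_hausdorff_measure) simp
  finally show ?thesis
    unfolding s_def .
qed

lemma inverse_two_pow_eq_powr: "1 / 2^k = (1 / 3^k :: real) powr (ln 2 / ln 3)"
  using inverse_three_pow_powr_ln_ratio[of k 1] by simp

lemma sup_hyperplane_nbhd_le:
  fixes \<epsilon> :: real
  assumes "0 < \<epsilon>" "\<epsilon> < 1"
  shows "(SUP L\<in>(affine_hyperplanes :: (real^'n::finite) set set).
            hausdorff_measure (cantor_dust_dim TYPE('n)) (open_nbhd L \<epsilon> \<inter> cantor_dust))
         \<le> ennreal (2 * (4 * real CARD('n) + 3) * real CARD('n) powr cantor_dust_dim TYPE('n)
                    * \<epsilon> powr (ln 2 / ln 3))"
proof -
  define \<alpha> where "\<alpha> = ln (2::real) / ln 3"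
  define s where "s = cantor_dust_dim TYPE('n)"
  define C where "C = (4 * real CARD('n) + 3) * real CARD('n) powr s"
  obtain k where k: "1 / 3^Suc k \<le> \<epsilon>" "\<epsilon> < 1 / 3^k"
    using exists_triadic_scale[OF assms] .
  have "1 / 2^k \<le> (3 * \<epsilon>) powr \<alpha>"
    unfolding \<alpha>_def inverse_two_pow_eq_powr using k(1) by (intro powr_mono2) (auto simp: field_simps)
  also have "\<dots> = 2 * \<epsilon> powr \<alpha>"
    by (simp add: \<alpha>_def powr_mult three_powr_ln_ratio[of 1, simplified])
  finally have "C * (1 / 2^k) \<le> C * (2 * \<epsilon> powr \<alpha>)"
    by (rule mult_left_mono) (simp add: C_def)
  also have "\<dots> = 2 * (4 * real CARD('n) + 3) * real CARD('n) powr s * \<epsilon> powr \<alpha>"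
    by (simp add: C_def mult_ac)
  finally have scale: "ennreal (C / 2^k)
      \<le> ennreal (2 * (4 * real CARD('n) + 3) * real CARD('n) powr s * \<epsilon> powr \<alpha>)"
    by (intro ennreal_leI) simp
  show ?thesis
  proof (rule SUP_least)
    fix L :: "(real^'n) set" assume "L \<in> affine_hyperplanes"
    then obtain a b where "L = {x. a \<bullet> x = b}" "a \<noteq> 0"
      unfolding affine_hyperplanes_def by blast
    then have "hausdorff_measure s (open_nbhd L \<epsilon> \<inter> cantor_dust) \<le> ennreal (C / 2^k)"
      using hausdorff_measure_hyperplane_nbhd_le[of a \<epsilon> k b] k(2) by (simp add: C_def s_def)
    also note scale
    finally show "hausdorff_measure (cantor_dust_dim TYPE('n)) (open_nbhd L \<epsilon> \<inter> cantor_dust)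
        \<le> ennreal (2 * (4 * real CARD('n) + 3) * real CARD('n) powr cantor_dust_dim TYPE('n)
                   * \<epsilon> powr (ln 2 / ln 3))"
      unfolding s_def \<alpha>_def .
  qed
qed

lemma sup_hyperplane_nbhd_ge:
  fixes \<epsilon> :: real
  assumes "0 < \<epsilon>" "\<epsilon> < 1"
  shows "ennreal (1 / (4 * 3 powr cantor_dust_dim TYPE('n)) * \<epsilon> powr (ln 2 / ln 3))
         \<le> (SUP L\<in>(affine_hyperplanes :: (real^'n::finite) set set).
               hausdorff_measure (cantor_dust_dim TYPE('n)) (open_nbhd L \<epsilon> \<inter> cantor_dust))"
proof -
  define \<alpha> where "\<alpha> = ln (2::real) / ln 3"
  define s where "s = cantor_dust_dim TYPE('n)"
  obtain k where k: "1 / 3^Suc k \<le> \<epsilon>" "\<epsilon> < 1 / 3^k"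
    using exists_triadic_scale[OF assms] .
  have "(9::real) powr \<alpha> = 3 powr \<alpha> * 3 powr \<alpha>"
    by (simp add: powr_mult[symmetric])
  then have "\<epsilon> powr \<alpha> / 4 = (\<epsilon> / 9) powr \<alpha>"
    using three_powr_ln_ratio[of 1] assms(1) by (simp add: \<alpha>_def powr_divide)
  also have "\<dots> \<le> 1 / 2^Suc (Suc k)"
    unfolding \<alpha>_def inverse_two_pow_eq_powr using k(2) assms(1) by (intro powr_mono2) auto
  finally have "\<epsilon> powr \<alpha> / 4 / 3 powr s \<le> 1 / 2^Suc (Suc k) / 3 powr s"
    by (rule divide_right_mono) simp
  then have "ennreal (1 / (4 * 3 powr s) * \<epsilon> powr \<alpha>) \<le> ennreal (1 / 2^Suc (Suc k) / 3 powr s)"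
    by (intro ennreal_leI) simp
  also have "\<dots> \<le> hausdorff_measure s (open_nbhd {x::real^'n. axis undefined 1 \<bullet> x = 0} \<epsilon> \<inter> cantor_dust)"
  proof -
    have "(1::real) / 3^Suc (Suc k) < 1 / 3^Suc k"
      by (rule divide_strict_left_mono) auto
    then have "1 / 3^Suc (Suc k) < \<epsilon>"
      using k(1) by linarith
    then show ?thesis
      unfolding s_def by (rule hausdorff_measure_coordinate_slab_ge)
  qed
  also have "\<dots> \<le> (SUP L\<in>(affine_hyperplanes :: (real^'n) set set).
                  hausdorff_measure s (open_nbhd L \<epsilon> \<inter> cantor_dust))"
    by (rule SUP_upper) (auto simp: affine_hyperplanes_def intro!: exI[of _ "axis undefined 1"])
  finally show ?thesis
    by (simp add: s_def \<alpha>_def)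
qed

lemma sup_hyperplane_nbhd_bounds:
  fixes \<epsilon> :: real
  assumes "0 < \<epsilon>" "\<epsilon> < 1"
  defines "S \<equiv> enn2real (SUP L\<in>(affine_hyperplanes :: (real^'n::finite) set set).
                  hausdorff_measure (cantor_dust_dim TYPE('n)) (open_nbhd L \<epsilon> \<inter> cantor_dust))"
  shows "1 / (4 * 3 powr cantor_dust_dim TYPE('n)) * \<epsilon> powr (ln 2 / ln 3) \<le> S"
    and "S \<le> 2 * (4 * real CARD('n) + 3) * real CARD('n) powr cantor_dust_dim TYPE('n) * \<epsilon> powr (ln 2 / ln 3)"
proof -
  note upper = sup_hyperplane_nbhd_le[OF assms(1,2), where 'n='n]
  then show "S \<le> 2 * (4 * real CARD('n) + 3) * real CARD('n) powr cantor_dust_dim TYPE('n) * \<epsilon> powr (ln 2 / ln 3)"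
    unfolding S_def by (rule enn2real_leI[rotated]) simp
  have "enn2real (ennreal (1 / (4 * 3 powr cantor_dust_dim TYPE('n)) * \<epsilon> powr (ln 2 / ln 3))) \<le> S"
    unfolding S_def using upper
    by (intro enn2real_mono sup_hyperplane_nbhd_ge[OF assms(1,2)])
      (simp_all add: top.not_eq_extremum order.strict_trans1)
  then show "1 / (4 * 3 powr cantor_dust_dim TYPE('n)) * \<epsilon> powr (ln 2 / ln 3) \<le> S"
    by simp
qed

lemma tendsto_plus_div_ln_at_right_0: "((\<lambda>\<epsilon>::real. \<alpha> + c / ln \<epsilon>) \<longlongrightarrow> \<alpha>) (at_right 0)"
proof -
  have "filterlim ln at_infinity (at_right (0::real))"
    by (rule filterlim_mono[OF ln_at_0 at_bot_le_at_infinity order_refl])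
  then have "((\<lambda>\<epsilon>::real. c / ln \<epsilon>) \<longlongrightarrow> 0) (at_right 0)"
    by (rule tendsto_divide_0[OF tendsto_const])
  then show ?thesis
    using tendsto_add[OF tendsto_const, of "\<lambda>\<epsilon>. c / ln \<epsilon>" 0 _ \<alpha>] by simp
qed

lemma Liminf_ln_ratio_eq:
  fixes f :: "real \<Rightarrow> real"
  assumes "c > 0"
    and lower: "\<And>\<epsilon>. 0 < \<epsilon> \<Longrightarrow> \<epsilon> < 1 \<Longrightarrow> c * \<epsilon> powr \<alpha> \<le> f \<epsilon>"
    and upper: "\<And>\<epsilon>. 0 < \<epsilon> \<Longrightarrow> \<epsilon> < 1 \<Longrightarrow> f \<epsilon> \<le> C * \<epsilon> powr \<alpha>"
  shows "Liminf (at_right 0) (\<lambda>\<epsilon>. ereal (ln (f \<epsilon>) / ln \<epsilon>)) = ereal \<alpha>"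
proof -
  have between: "\<alpha> + ln C / ln \<epsilon> \<le> ln (f \<epsilon>) / ln \<epsilon> \<and> ln (f \<epsilon>) / ln \<epsilon> \<le> \<alpha> + ln c / ln \<epsilon>"
    if "0 < \<epsilon>" "\<epsilon> < 1" for \<epsilon>
  proof -
    have "ln \<epsilon> < 0"
      using that by simp
    have cpos: "0 < c * \<epsilon> powr \<alpha>"
      using \<open>c > 0\<close> that by simp
    have fpos: "0 < f \<epsilon>"
      using less_le_trans[OF cpos lower[OF that]] .
    have Cpos: "0 < C * \<epsilon> powr \<alpha>"
      using less_le_trans[OF fpos upper[OF that]] .
    then have "C > 0"
      using that by (simp add: zero_less_mult_iff)
    have "ln c + \<alpha> * ln \<epsilon> = ln (c * \<epsilon> powr \<alpha>)"
      using \<open>c > 0\<close> that by (simp add: ln_mult)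
    also have "\<dots> \<le> ln (f \<epsilon>)"
      using lower[OF that] cpos fpos by simp
    finally have "ln (f \<epsilon>) / ln \<epsilon> \<le> (ln c + \<alpha> * ln \<epsilon>) / ln \<epsilon>"
      using \<open>ln \<epsilon> < 0\<close> by (intro divide_right_mono_neg) simp_all
    have "ln (f \<epsilon>) \<le> ln (C * \<epsilon> powr \<alpha>)"
      using upper[OF that] Cpos fpos by simp
    also have "\<dots> = ln C + \<alpha> * ln \<epsilon>"
      using \<open>C > 0\<close> that by (simp add: ln_mult)
    finally have "(ln C + \<alpha> * ln \<epsilon>) / ln \<epsilon> \<le> ln (f \<epsilon>) / ln \<epsilon>"
      using \<open>ln \<epsilon> < 0\<close> by (intro divide_right_mono_neg) simp_all
    with \<open>ln (f \<epsilon>) / ln \<epsilon> \<le> (ln c + \<alpha> * ln \<epsilon>) / ln \<epsilon>\<close> show ?thesis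
      using \<open>ln \<epsilon> < 0\<close> by (simp add: add_divide_distrib)
  qed
  have "\<forall>\<^sub>F \<epsilon> in at_right 0. \<epsilon> \<in> {0<..<(1::real)}"
    by (rule eventually_at_right_real) simp
  then have "\<forall>\<^sub>F \<epsilon> in at_right 0. \<alpha> + ln C / ln \<epsilon> \<le> ln (f \<epsilon>) / ln \<epsilon>"
    and "\<forall>\<^sub>F \<epsilon> in at_right 0. ln (f \<epsilon>) / ln \<epsilon> \<le> \<alpha> + ln c / ln \<epsilon>"
    by (eventually_elim, use between in auto)+
  then have "((\<lambda>\<epsilon>. ln (f \<epsilon>) / ln \<epsilon>) \<longlongrightarrow> \<alpha>) (at_right 0)"
    by (rule tendsto_sandwich[OF _ _ tendsto_plus_div_ln_at_right_0 tendsto_plus_div_ln_at_right_0])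
  then have "((\<lambda>\<epsilon>. ereal (ln (f \<epsilon>) / ln \<epsilon>)) \<longlongrightarrow> ereal \<alpha>) (at_right 0)"
    by (rule tendsto_ereal)
  then show ?thesis
    by (rule lim_imp_Liminf[rotated]) simp
qed

theorem mainTheorem8:
  fixes s :: real
    and \<mu> :: "(real ^ 'n) set \<Rightarrow> ennreal"
  assumes "s = hausdorff_dim (cantor_dust :: (real ^ 'n) set)"
    and "\<mu> = (\<lambda>A. hausdorff_measure s (A \<inter> cantor_dust))"
  shows "alpha1 \<mu> = ereal (ln 2 / ln 3)"
proof -
  have \<mu>: "\<mu> = (\<lambda>A. hausdorff_measure (cantor_dust_dim TYPE('n)) (A \<inter> cantor_dust))"
    using assms by (simp add: hausdorff_dim_cantor_dust)
  show ?thesis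
    unfolding alpha1_def \<mu>
    by (rule Liminf_ln_ratio_eq[OF _ sup_hyperplane_nbhd_bounds]) auto
qed

end
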